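(* Let $G$ be a loopless graph and $n$ a positive integer. If $c$ and $d$ are two proper $n$-edge colorings of $G$ with $c\sim d$, and there is a vertex $v$ such that $c(e)=d(e)$ for every edge $e$ incident to $v$, then there exists a sequence of edge-Kempe switches transforming $c$ into $d$ in which the colors on the edges incident to $v$ are never changed.
   Context: Graphs are finite and may have multiple edges. A proper $n$-edge coloring assigns to each edge a color from $\{1,\dots,n\}$ so that edges sharing an endpoint receive different colors. For a proper edge coloring and two distinct colors $a,b$, an edge-Kempe chain is a connected component of the subgraph formed by the edges colored $a$ or $b$; an edge-Kempe switch interchanges the colors $a$ and $b$ on one such chain, producing another proper edge coloring. We write $c\sim d$ if $d$ can be obtained from $c$ by a finite sequence of edge-Kempe switches. *)

theory Defs
  imports Main
begin

text \<open>Parallel edges are allowed (distinct edges may have the same endpoints).\<close>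
definition loopless_multigraph :: "'v set \<Rightarrow> 'e set \<Rightarrow> ('e \<Rightarrow> 'v set) \<Rightarrow> bool" where
  "loopless_multigraph V E ends \<longleftrightarrow> finite V \<and> finite E \<and>
     (\<forall>e\<in>E. ends e \<subseteq> V \<and> card (ends e) = 2)"

text \<open>Proper n-edge colouring (colours 1..n); colourings are identified with their
  values on E, so we normalise them to 0 outside E.\<close>
definition proper_edge_coloring ::
  "'e set \<Rightarrow> ('e \<Rightarrow> 'v set) \<Rightarrow> nat \<Rightarrow> ('e \<Rightarrow> nat) \<Rightarrow> bool" where
  "proper_edge_coloring E ends n c \<longleftrightarrow>
     (\<forall>e\<in>E. c e \<in> {1..n}) \<and> (\<forall>e. e \<notin> E \<longrightarrow> c e = 0) \<and>
     (\<forall>e\<in>E. \<forall>f\<in>E. e \<noteq> f \<and> ends e \<inter> ends f \<noteq> {} \<longrightarrow> c e \<noteq> c f)"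

definition ab_adj :: "'e set \<Rightarrow> ('e \<Rightarrow> 'v set) \<Rightarrow> ('e \<Rightarrow> nat) \<Rightarrow> nat \<Rightarrow> nat \<Rightarrow> 'e \<Rightarrow> 'e \<Rightarrow> bool" where
  "ab_adj E ends c a b e f \<longleftrightarrow> e \<in> E \<and> f \<in> E \<and> c e \<in> {a, b} \<and> c f \<in> {a, b} \<and>
     ends e \<inter> ends f \<noteq> {}"

definition kempe_chain :: "'e set \<Rightarrow> ('e \<Rightarrow> 'v set) \<Rightarrow> ('e \<Rightarrow> nat) \<Rightarrow> nat \<Rightarrow> nat \<Rightarrow> 'e set \<Rightarrow> bool" where
  "kempe_chain E ends c a b K \<longleftrightarrow>
     (\<exists>e0\<in>E. c e0 \<in> {a, b} \<and> K = {f. (ab_adj E ends c a b)\<^sup>*\<^sup>* e0 f})"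

definition kempe_switch :: "('e \<Rightarrow> nat) \<Rightarrow> nat \<Rightarrow> nat \<Rightarrow> 'e set \<Rightarrow> 'e \<Rightarrow> nat" where
  "kempe_switch c a b K = (\<lambda>e. if e \<in> K then (if c e = a then b else a) else c e)"

definition kempe_step :: "'e set \<Rightarrow> ('e \<Rightarrow> 'v set) \<Rightarrow> nat \<Rightarrow> ('e \<Rightarrow> nat) \<Rightarrow> ('e \<Rightarrow> nat) \<Rightarrow> bool" where
  "kempe_step E ends n c d \<longleftrightarrow>
     (\<exists>a b K. a \<in> {1..n} \<and> b \<in> {1..n} \<and> a \<noteq> b \<and> kempe_chain E ends c a b K \<and>
        d = kempe_switch c a b K)"

text \<open>c \<sim> d : d is obtained from c by finitely many edge-Kempe switches.\<close>
definition kempe_equiv :: "'e set \<Rightarrow> ('e \<Rightarrow> 'v set) \<Rightarrow> nat \<Rightarrow> ('e \<Rightarrow> nat) \<Rightarrow> ('e \<Rightarrow> nat) \<Rightarrow> bool" where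
  "kempe_equiv E ends n = (kempe_step E ends n)\<^sup>*\<^sup>*"

definition kempe_step_fixing :: "'e set \<Rightarrow> ('e \<Rightarrow> 'v set) \<Rightarrow> nat \<Rightarrow> 'v \<Rightarrow> ('e \<Rightarrow> nat) \<Rightarrow> ('e \<Rightarrow> nat) \<Rightarrow> bool" where
  "kempe_step_fixing E ends n v c d \<longleftrightarrow>
     kempe_step E ends n c d \<and> (\<forall>e\<in>E. v \<in> ends e \<longrightarrow> c e = d e)"

end

theory Submission
  imports Defs "HOL-Combinatorics.Permutations"
begin

text \<open>Follow the given sequence of switches from c to d, but only up to a renaming of the
  colours by a permutation \<pi>. A switch on a chain avoiding v is performed as it is. A switch on
  the (a, b)-chain K through v is replaced by switching all the other (a, b)-chains, which avoid
  v: the result differs from the intended one exactly by the transposition of a and b, which is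
  absorbed into \<pi>. At the end we have reached \<pi> \<circ> d by switches fixing v. Since c and d
  agree at v, \<pi> fixes every colour occurring at v, so it is a product of transpositions of
  colours not occurring at v; each of them is undone by switching a whole two-coloured subgraph,
  which avoids v.\<close>

lemma ab_adj_sym: "ab_adj E ends c a b e f \<Longrightarrow> ab_adj E ends c a b f e"
  by (auto simp: ab_adj_def)

lemma kempe_chain_subset:
  assumes "kempe_chain E ends c a b K"
  shows "K \<subseteq> {e\<in>E. c e \<in> {a, b}}"
proof
  fix f assume "f \<in> K"
  with assms obtain e0 where e0: "e0 \<in> E" "c e0 \<in> {a, b}"
    and path: "(ab_adj E ends c a b)\<^sup>*\<^sup>* e0 f"
    unfolding kempe_chain_def by blast
  from path show "f \<in> {e\<in>E. c e \<in> {a, b}}"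
    by induction (use e0 in \<open>auto simp: ab_adj_def\<close>)
qed

lemma kempe_chain_closed:
  assumes "kempe_chain E ends c a b K" "e \<in> K" "ab_adj E ends c a b e f"
  shows "f \<in> K"
  using assms unfolding kempe_chain_def by (auto intro: rtranclp.rtrancl_into_rtrancl)

lemma kempe_step_fixingI:
  assumes "a \<in> {1..n}" "b \<in> {1..n}" "a \<noteq> b" "kempe_chain E ends c a b K"
    and "\<forall>e\<in>K. v \<notin> ends e"
  shows "kempe_step_fixing E ends n v c (kempe_switch c a b K)"
  using assms unfolding kempe_step_fixing_def kempe_step_def
  by (auto simp: kempe_switch_def)

lemma kempe_switch_Diff:
  "K \<subseteq> S \<Longrightarrow> kempe_switch (kempe_switch c a b K) a b (S - K) = kempe_switch c a b S"
  by (auto simp: kempe_switch_def fun_eq_iff)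

lemma ab_adj_kempe_switch:
  assumes "\<forall>e\<in>K. c e \<in> {a, b}"
  shows "ab_adj E ends (kempe_switch c a b K) a b = ab_adj E ends c a b"
  using assms by (intro ext) (auto simp: ab_adj_def kempe_switch_def)

lemma kempe_chain_Diff_closed:
  assumes "kempe_chain E ends c a b K" "\<forall>e f. e \<in> S \<longrightarrow> ab_adj E ends c a b e f \<longrightarrow> f \<in> S"
    and "e \<in> S - K" "ab_adj E ends c a b e f"
  shows "f \<in> S - K"
proof -
  have "f \<in> S" using assms(2-4) by blast
  moreover have "f \<notin> K"
  proof
    assume "f \<in> K"
    from kempe_chain_closed[OF assms(1) this ab_adj_sym[OF assms(4)]] assms(3)
    show False by simp
  qed
  ultimately show ?thesis by simp
qed

text \<open>A set of edges closed in the subgraph of colours a, b is a union of Kempe chains, which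
  are switched one after the other; switching one chain leaves the others Kempe chains.\<close>
lemma kempe_switch_closed_set_fixing:
  assumes "finite E" "a \<in> {1..n}" "b \<in> {1..n}" "a \<noteq> b"
    and "S \<subseteq> E" "\<forall>e\<in>S. c e \<in> {a, b} \<and> v \<notin> ends e"
    and "\<forall>e f. e \<in> S \<longrightarrow> ab_adj E ends c a b e f \<longrightarrow> f \<in> S"
  shows "(kempe_step_fixing E ends n v)\<^sup>*\<^sup>* c (kempe_switch c a b S)"
  using finite_subset[OF \<open>S \<subseteq> E\<close> \<open>finite E\<close>] assms(5-7)
proof (induction S arbitrary: c rule: finite_psubset_induct)
  case (psubset S)
  show ?case
  proof (cases "S = {}")
    case True
    then show ?thesis by (simp add: kempe_switch_def)
  next
    case False
    then obtain e0 where e0: "e0 \<in> S" by blast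
    define K where "K = {f. (ab_adj E ends c a b)\<^sup>*\<^sup>* e0 f}"
    have chain: "kempe_chain E ends c a b K"
      unfolding kempe_chain_def K_def using e0 psubset.prems by blast
    have "K \<subseteq> S"
    proof
      fix f assume "f \<in> K"
      then have "(ab_adj E ends c a b)\<^sup>*\<^sup>* e0 f" by (simp add: K_def)
      then show "f \<in> S" by induction (use e0 psubset.prems(3) in auto)
    qed
    define c' where "c' = kempe_switch c a b K"
    have step: "kempe_step_fixing E ends n v c c'"
      unfolding c'_def
      by (rule kempe_step_fixingI[OF assms(2-4) chain]) (use \<open>K \<subseteq> S\<close> psubset.prems(2) in blast)
    have adj: "ab_adj E ends c' a b = ab_adj E ends c a b"
      unfolding c'_def using \<open>K \<subseteq> S\<close> psubset.prems(2) by (intro ab_adj_kempe_switch) blast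
    have "e0 \<in> K" by (simp add: K_def)
    have "(kempe_step_fixing E ends n v)\<^sup>*\<^sup>* c' (kempe_switch c' a b (S - K))"
    proof (rule psubset.IH)
      show "S - K \<subset> S" using e0 \<open>e0 \<in> K\<close> by blast
      show "S - K \<subseteq> E" using psubset.prems(1) by blast
      show "\<forall>e\<in>S - K. c' e \<in> {a, b} \<and> v \<notin> ends e"
        using psubset.prems(2) by (simp add: c'_def kempe_switch_def)
      show "\<forall>e f. e \<in> S - K \<longrightarrow> ab_adj E ends c' a b e f \<longrightarrow> f \<in> S - K"
        unfolding adj using kempe_chain_Diff_closed[OF chain psubset.prems(3)] by blast
    qed
    moreover have "kempe_switch c' a b (S - K) = kempe_switch c a b S"
      unfolding c'_def using \<open>K \<subseteq> S\<close> by (rule kempe_switch_Diff)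
    ultimately show ?thesis
      using step by (simp add: converse_rtranclp_into_rtranclp)
  qed
qed

lemma ab_adj_comp:
  "inj \<pi> \<Longrightarrow> ab_adj E ends (\<pi> \<circ> c) (\<pi> a) (\<pi> b) = ab_adj E ends c a b"
  unfolding ab_adj_def by (intro ext) (simp add: inj_eq)

lemma kempe_switch_comp:
  "inj \<pi> \<Longrightarrow> kempe_switch (\<pi> \<circ> c) (\<pi> a) (\<pi> b) K = \<pi> \<circ> kempe_switch c a b K"
  unfolding kempe_switch_def by (simp add: fun_eq_iff inj_eq)

lemma kempe_switch_color_class:
  "kempe_switch c a b {e. c e \<in> {a, b}} = Transposition.transpose a b \<circ> c"
  unfolding kempe_switch_def by (simp add: fun_eq_iff transpose_def)

lemma kempe_chain_comp:
  "inj \<pi> \<Longrightarrow> kempe_chain E ends (\<pi> \<circ> c) (\<pi> a) (\<pi> b) K = kempe_chain E ends c a b K"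
  unfolding kempe_chain_def by (simp add: ab_adj_comp inj_eq)

lemma kempe_switch_complement:
  assumes "K \<subseteq> {e. c e \<in> {a, b}}" "\<forall>e. e \<notin> E \<longrightarrow> c e \<notin> {a, b}"
  shows "kempe_switch c a b ({e\<in>E. c e \<in> {a, b}} - K)
    = Transposition.transpose a b \<circ> kempe_switch c a b K"
proof
  fix e
  show "kempe_switch c a b ({e\<in>E. c e \<in> {a, b}} - K) e
    = (Transposition.transpose a b \<circ> kempe_switch c a b K) e"
    using assms by (cases "e \<in> E") (auto simp: kempe_switch_def transpose_def)
qed

text \<open>The edges at v coloured a or b pairwise share v, so if one of them lies in the chain K,
  all of them do.\<close>
lemma kempe_chain_complement_avoids:
  assumes "kempe_chain E ends c a b K" "g \<in> K" "v \<in> ends g"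
    and "e \<in> {e\<in>E. c e \<in> {a, b}} - K"
  shows "v \<notin> ends e"
proof
  assume "v \<in> ends e"
  moreover have "g \<in> E" "c g \<in> {a, b}"
    using kempe_chain_subset[OF assms(1)] assms(2) by auto
  ultimately have "ab_adj E ends c a b g e"
    using assms(3,4) by (auto simp: ab_adj_def)
  then have "e \<in> K" by (rule kempe_chain_closed[OF assms(1,2)])
  with assms(4) show False by simp
qed

lemma kempe_step_outside:
  assumes "kempe_step E ends n c d" "e \<notin> E"
  shows "d e = c e"
proof -
  from assms(1) obtain a b K where "kempe_chain E ends c a b K" "d = kempe_switch c a b K"
    unfolding kempe_step_def by blast
  with kempe_chain_subset assms(2) show ?thesis by (fastforce simp: kempe_switch_def)
qed

lemma kempe_steps_outside:
  "(kempe_step E ends n)\<^sup>*\<^sup>* c d \<Longrightarrow> e \<notin> E \<Longrightarrow> d e = c e"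
  by (induction rule: rtranclp_induct) (auto dest: kempe_step_outside)

lemma kempe_steps_fixing_agree_at:
  "(kempe_step_fixing E ends n v)\<^sup>*\<^sup>* c d \<Longrightarrow> e \<in> E \<Longrightarrow> v \<in> ends e \<Longrightarrow> d e = c e"
  by (induction rule: rtranclp_induct) (auto simp: kempe_step_fixing_def)

lemma permutes_restrict:
  assumes "p permutes S" "\<forall>x\<in>S - T. p x = x"
  shows "p permutes T"
  using assms unfolding permutes_def by blast

lemma kempe_step_fixing_up_to_permutation:
  assumes "finite E" "kempe_step E ends n x x'" "\<pi> permutes {1..n}"
    and "\<forall>e. e \<notin> E \<longrightarrow> x e \<notin> {1..n}"
  obtains \<pi>' where "\<pi>' permutes {1..n}"
    "(kempe_step_fixing E ends n v)\<^sup>*\<^sup>* (\<pi> \<circ> x) (\<pi>' \<circ> x')"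
proof -
  obtain a b K where ab: "a \<in> {1..n}" "b \<in> {1..n}" "a \<noteq> b"
    and chain: "kempe_chain E ends x a b K" and x': "x' = kempe_switch x a b K"
    using assms(2) unfolding kempe_step_def by blast
  have inj: "inj \<pi>" using assms(3) by (rule permutes_inj)
  have ab': "\<pi> a \<in> {1..n}" "\<pi> b \<in> {1..n}" "\<pi> a \<noteq> \<pi> b"
    using ab permutes_in_image[OF assms(3)] inj_eq[OF inj] by blast+
  have chain': "kempe_chain E ends (\<pi> \<circ> x) (\<pi> a) (\<pi> b) K"
    using chain by (simp add: kempe_chain_comp[OF inj])
  show thesis
  proof (cases "\<exists>g\<in>K. v \<in> ends g")
    case False
    then have "kempe_step_fixing E ends n v (\<pi> \<circ> x) (\<pi> \<circ> x')"
      using kempe_step_fixingI[OF ab' chain'] unfolding x' kempe_switch_comp[OF inj] by blast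
    then show thesis by (intro that[OF assms(3)] r_into_rtranclp)
  next
    case True
    then obtain g where g: "g \<in> K" "v \<in> ends g" by blast
    define S where "S = {e\<in>E. x e \<in> {a, b}} - K"
    have "(kempe_step_fixing E ends n v)\<^sup>*\<^sup>* (\<pi> \<circ> x) (kempe_switch (\<pi> \<circ> x) (\<pi> a) (\<pi> b) S)"
    proof (rule kempe_switch_closed_set_fixing[OF assms(1) ab'])
      show "S \<subseteq> E" by (auto simp: S_def)
      show "\<forall>e\<in>S. (\<pi> \<circ> x) e \<in> {\<pi> a, \<pi> b} \<and> v \<notin> ends e"
        using kempe_chain_complement_avoids[OF chain g] by (auto simp: S_def)
      show "\<forall>e f. e \<in> S \<longrightarrow> ab_adj E ends (\<pi> \<circ> x) (\<pi> a) (\<pi> b) e f \<longrightarrow> f \<in> S"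
        unfolding ab_adj_comp[OF inj] S_def
      proof (intro allI impI)
        have "\<forall>e f. e \<in> {e\<in>E. x e \<in> {a, b}} \<longrightarrow> ab_adj E ends x a b e f
            \<longrightarrow> f \<in> {e\<in>E. x e \<in> {a, b}}"
          by (simp add: ab_adj_def)
        then show "f \<in> {e\<in>E. x e \<in> {a, b}} - K"
          if "e \<in> {e\<in>E. x e \<in> {a, b}} - K" "ab_adj E ends x a b e f" for e f
          using that by (rule kempe_chain_Diff_closed[OF chain])
      qed
    qed
    moreover have "kempe_switch x a b S = Transposition.transpose a b \<circ> x'"
      unfolding S_def x'
    proof (rule kempe_switch_complement)
      show "K \<subseteq> {e. x e \<in> {a, b}}" using kempe_chain_subset[OF chain] by blast
      show "\<forall>e. e \<notin> E \<longrightarrow> x e \<notin> {a, b}" using assms(4) ab(1,2) by blast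
    qed
    ultimately have
      "(kempe_step_fixing E ends n v)\<^sup>*\<^sup>* (\<pi> \<circ> x) ((\<pi> \<circ> Transposition.transpose a b) \<circ> x')"
      by (simp add: kempe_switch_comp[OF inj] comp_assoc)
    moreover have "\<pi> \<circ> Transposition.transpose a b permutes {1..n}"
      using assms(3) ab by (simp add: permutes_compose permutes_swap_id)
    ultimately show thesis by (rule that[rotated])
  qed
qed

lemma kempe_equiv_fixing_up_to_permutation:
  assumes "finite E" "kempe_equiv E ends n c d" "\<forall>e. e \<notin> E \<longrightarrow> c e \<notin> {1..n}"
  obtains \<pi> where "\<pi> permutes {1..n}" "(kempe_step_fixing E ends n v)\<^sup>*\<^sup>* c (\<pi> \<circ> d)"
proof -
  have "(kempe_step E ends n)\<^sup>*\<^sup>* c d" using assms(2) by (simp add: kempe_equiv_def)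
  then have "\<exists>\<pi>. \<pi> permutes {1..n} \<and> (kempe_step_fixing E ends n v)\<^sup>*\<^sup>* c (\<pi> \<circ> d)"
  proof (induction rule: rtranclp_induct)
    case base
    show ?case by (intro exI[of _ id] conjI permutes_id) simp
  next
    case (step x x')
    from step.IH obtain \<pi> where \<pi>: "\<pi> permutes {1..n}"
      and steps: "(kempe_step_fixing E ends n v)\<^sup>*\<^sup>* c (\<pi> \<circ> x)" by blast
    have "\<forall>e. e \<notin> E \<longrightarrow> x e \<notin> {1..n}"
      using assms(3) kempe_steps_outside[OF step.hyps(1)] by simp
    then obtain \<pi>' where "\<pi>' permutes {1..n}"
      "(kempe_step_fixing E ends n v)\<^sup>*\<^sup>* (\<pi> \<circ> x) (\<pi>' \<circ> x')"
      by (rule kempe_step_fixing_up_to_permutation[OF assms(1) step.hyps(2) \<pi>])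
    with steps show ?case by (blast intro: rtranclp_trans)
  qed
  then show thesis using that by blast
qed

lemma permuted_coloring_fixing:
  assumes "finite E" "\<pi> permutes C" "finite C" "C \<subseteq> {1..n}"
    and "\<forall>e. e \<notin> E \<or> v \<in> ends e \<longrightarrow> d e \<notin> C"
  shows "(kempe_step_fixing E ends n v)\<^sup>*\<^sup>* (\<pi> \<circ> d) d"
  using assms(2,3)
proof (induction rule: permutes_induct)
  case id
  show ?case by simp
next
  case (swap a b p)
  let ?y = "Transposition.transpose a b \<circ> p \<circ> d"
  have unmoved: "?y e = d e" if "d e \<notin> C" for e
    using that swap(1,2) permutes_not_in[OF \<open>p permutes C\<close>] by (auto simp: transpose_def)
  have moved: "d e \<in> C" if "?y e \<in> {a, b}" for e
  proof (rule ccontr)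
    assume "d e \<notin> C"
    with unmoved that swap(1,2) show False by auto
  qed
  have "(kempe_step_fixing E ends n v)\<^sup>*\<^sup>* ?y (kempe_switch ?y a b {e. ?y e \<in> {a, b}})"
  proof (rule kempe_switch_closed_set_fixing[OF assms(1)])
    show "a \<in> {1..n}" "b \<in> {1..n}" "a \<noteq> b" using swap(1-3) assms(4) by auto
    show "{e. ?y e \<in> {a, b}} \<subseteq> E"
      "\<forall>e\<in>{e. ?y e \<in> {a, b}}. ?y e \<in> {a, b} \<and> v \<notin> ends e"
      using assms(5) moved by blast+
    show "\<forall>e f. e \<in> {e. ?y e \<in> {a, b}} \<longrightarrow> ab_adj E ends ?y a b e f
      \<longrightarrow> f \<in> {e. ?y e \<in> {a, b}}"
      by (simp add: ab_adj_def)
  qed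
  moreover have "kempe_switch ?y a b {e. ?y e \<in> {a, b}} = p \<circ> d"
    unfolding kempe_switch_color_class by (simp add: fun_eq_iff)
  ultimately have "(kempe_step_fixing E ends n v)\<^sup>*\<^sup>* ?y (p \<circ> d)" by simp
  then show ?case using swap.IH by (rule rtranclp_trans)
qed

theorem theorem5:
  fixes V :: "'v set" and E :: "'e set" and ends :: "'e \<Rightarrow> 'v set"
    and n :: nat and c d :: "'e \<Rightarrow> nat" and v :: 'v
  assumes "loopless_multigraph V E ends"
    and "n \<ge> 1"
    and "proper_edge_coloring E ends n c"
    and "proper_edge_coloring E ends n d"
    and "kempe_equiv E ends n c d"
    and "v \<in> V"
    and "\<forall>e\<in>E. v \<in> ends e \<longrightarrow> c e = d e"
  shows "(kempe_step_fixing E ends n v)\<^sup>*\<^sup>* c d"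
proof -
  have fin: "finite E" using assms(1) by (simp add: loopless_multigraph_def)
  have c0: "\<forall>e. e \<notin> E \<longrightarrow> c e = 0" and d0: "\<forall>e. e \<notin> E \<longrightarrow> d e = 0"
    using assms(3,4) by (simp_all add: proper_edge_coloring_def)
  have "\<forall>e. e \<notin> E \<longrightarrow> c e \<notin> {1..n}" using c0 by simp
  then obtain \<pi> where \<pi>: "\<pi> permutes {1..n}"
    and to_\<pi>d: "(kempe_step_fixing E ends n v)\<^sup>*\<^sup>* c (\<pi> \<circ> d)"
    by (rule kempe_equiv_fixing_up_to_permutation[OF fin assms(5)])
  have fixes_at_v: "\<pi> (d e) = d e" if "e \<in> E" "v \<in> ends e" for e
    using kempe_steps_fixing_agree_at[OF to_\<pi>d that] assms(7) that by simp
  define C where "C = {1..n} - d ` {e\<in>E. v \<in> ends e}"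
  have "(kempe_step_fixing E ends n v)\<^sup>*\<^sup>* (\<pi> \<circ> d) d"
  proof (rule permuted_coloring_fixing[OF fin])
    show "\<pi> permutes C"
      using \<pi> by (rule permutes_restrict) (use fixes_at_v in \<open>auto simp: C_def\<close>)
    show "finite C" "C \<subseteq> {1..n}" by (auto simp: C_def)
    show "\<forall>e. e \<notin> E \<or> v \<in> ends e \<longrightarrow> d e \<notin> C"
      using d0 by (auto simp: C_def)
  qed
  with to_\<pi>d show ?thesis by (rule rtranclp_trans)
qed

end
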